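(* Let $X\in\mathbb{R}^{m\times n}_+$, $W\in\mathbb{R}^{m\times r}$ and $H\in\mathbb{R}^{r\times n}_+$ be such that $X=WH$ satisfies the facet-based conditions (FBC) for some integer $s$. Then every facet of $\operatorname{conv}(W)$ is a facet of $\operatorname{conv}(X)$.
   Context: For a matrix $M$, $\operatorname{conv}(M)$ denotes the convex hull of its columns. A facet of a polytope is a face of dimension one less than the dimension of the polytope. The unit simplex is $\Delta^r=\{x\in\mathbb{R}^r: x\ge 0,\ \sum_i x_i=1\}$. Facet-based conditions (FBC) with parameter $s$ for $X=WH$, where $d=\operatorname{rank}(X)$: (a) no column of $W$ lies in the convex hull of the other columns of $W$ (so $\operatorname{conv}(W)$ is a polytope whose $r$ vertices are the columns of $W$); (b) $H(:,j)\in\Delta^r$ for all $j=1,\dots,n$; (c) each facet of $\operatorname{conv}(W)$ contains at least $s\ge d$ distinct columns of $X$, and among them at least $d-1$ generate that facet (i.e., the convex hull of these $s$ columns has dimension $d-2$); (d) every facet of $\operatorname{conv}(X)$ which is not a facet of $\operatorname{conv}(W)$ contains strictly fewer than $s$ distinct columns of $X$. *)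

theory Defs
  imports "HOL-Analysis.Analysis"
begin

definition conv_cols :: "real^'c^'m \<Rightarrow> (real^'m) set" where
  "conv_cols M = convex hull (columns M)"

definition FBC :: "real^'n^'m \<Rightarrow> real^'r^'m \<Rightarrow> real^'n^'r \<Rightarrow> nat \<Rightarrow> bool" where
  "FBC X W H s \<longleftrightarrow>
     X = W ** H \<and>
     s \<ge> rank X \<and>
     \<comment> \<open>(a)\<close>
     (\<forall>k. column k W \<notin> convex hull ((\<lambda>i. column i W) ` (UNIV - {k}))) \<and>
     \<comment> \<open>(b)\<close>
     (\<forall>j. (\<forall>i. H $ i $ j \<ge> 0) \<and> (\<Sum>i\<in>UNIV. H $ i $ j) = 1) \<and>
     \<comment> \<open>(c)\<close>
     (\<forall>F. F facet_of conv_cols W \<longrightarrow>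
        (\<exists>S. S \<subseteq> F \<inter> columns X \<and> card S \<ge> s \<and>
             aff_dim (convex hull S) = int (rank X) - 2)) \<and>
     \<comment> \<open>(d)\<close>
     (\<forall>G. G facet_of conv_cols X \<and> \<not> G facet_of conv_cols W \<longrightarrow>
        card (G \<inter> columns X) < s)"

end

theory Submission
  imports Defs
begin

text \<open>
  Write \<open>P = conv(X) \<subseteq> Q = conv(W)\<close>. By (c) every facet \<open>F\<close> of \<open>Q\<close> contains a nonempty set
  \<open>S\<close> of at least \<open>s\<close> columns of \<open>X\<close>, and by (d) every facet of \<open>P\<close> through \<open>S\<close> is a facet
  of \<open>Q\<close>. Take \<open>g\<close> in the relative interior of \<open>F \<inter> P\<close>: the facets of \<open>P\<close> through \<open>g\<close>
  are then facets of \<open>Q\<close>, so \<open>Q\<close> satisfies the inequalities describing \<open>P\<close> near \<open>g\<close>, and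
  \<open>P\<close> and \<open>Q\<close> coincide near \<open>g\<close>. Hence \<open>F \<inter> P\<close> has the dimension of \<open>F\<close>, is a facet of
  \<open>P\<close>, and therefore equals \<open>F\<close>. The remaining case \<open>P \<subseteq> F\<close> would force \<open>P\<close> into every
  facet of \<open>Q\<close>, whose intersection is empty.
\<close>

lemma facet_of_subset_eq:
  fixes Q :: "'a::euclidean_space set"
  assumes "C1 facet_of Q" "C2 facet_of Q" "C1 \<subseteq> C2"
  shows "C1 = C2"
proof (rule ccontr)
  assume "C1 \<noteq> C2"
  have "C1 face_of C2"
    using assms face_of_subset facet_of_imp_face_of facet_of_imp_subset by blast
  then have "aff_dim C1 < aff_dim C2"
    using \<open>C1 \<noteq> C2\<close> assms(2) face_of_aff_dim_lt face_of_imp_convex facet_of_imp_face_of by blast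
  then show False using assms unfolding facet_of_def by simp
qed

lemma affine_hull_facet_eq_Int_hyperplane:
  fixes P :: "'a::euclidean_space set"
  assumes C: "C facet_of P" and C_eq: "C = P \<inter> {x. a \<bullet> x = b}" and P_le: "P \<subseteq> {x. a \<bullet> x \<le> b}"
  shows "affine hull P \<inter> {x. a \<bullet> x = b} = affine hull C"
proof -
  define T where "T = affine hull P \<inter> {x. a \<bullet> x = b}"
  have "affine T" unfolding T_def by (simp add: affine_Int affine_hyperplane)
  have "C \<subseteq> T" using C_eq hull_subset[of P affine] unfolding T_def by blast
  then have C_T: "affine hull C \<subseteq> T" using \<open>affine T\<close> by (rule hull_minimal)
  have "C \<noteq> P" using C by auto
  then obtain p where "p \<in> P" "a \<bullet> p < b"
    using C_eq P_le by fastforce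
  then have "p \<in> affine hull P - T" using hull_subset[of P affine] unfolding T_def by auto
  then have "affine hull T \<subset> affine hull P"
    using \<open>affine T\<close> unfolding T_def by (auto simp: hull_same)
  then have "aff_dim T < aff_dim P" by (rule aff_dim_psubset)
  moreover have "aff_dim (affine hull C) = aff_dim P - 1" "affine hull C \<noteq> {}"
    using C unfolding facet_of_def by auto
  moreover have "aff_dim (affine hull C) \<le> aff_dim T" using C_T by (rule aff_dim_subset)
  ultimately have "affine hull C = T"
    using affine_dim_equal[OF affine_affine_hull \<open>affine T\<close> _ C_T] by simp
  then show ?thesis unfolding T_def by simp
qed

lemma common_facet_halfspace:
  fixes P Q :: "'a::euclidean_space set"
  assumes "convex Q" "P \<subseteq> Q" "affine hull P = affine hull Q"
    and CP: "C facet_of P" and CQ: "C face_of Q"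
    and C_eq: "C = P \<inter> {x. a \<bullet> x = b}" and P_le: "P \<subseteq> {x. a \<bullet> x \<le> b}"
  shows "Q \<subseteq> {x. a \<bullet> x \<le> b}"
proof
  fix q assume "q \<in> Q"
  show "q \<in> {x. a \<bullet> x \<le> b}"
  proof (rule ccontr)
    assume "q \<notin> {x. a \<bullet> x \<le> b}"
    then have aq: "b < a \<bullet> q" by simp
    have "C \<noteq> P" using CP by auto
    then obtain p where "p \<in> P" and ap: "a \<bullet> p < b"
      using C_eq P_le by fastforce
    \<comment> \<open>The segment from \<open>q\<close> to \<open>p\<close> meets the hyperplane in a point of the face \<open>C\<close> of \<open>Q\<close>,
      which forces \<open>p \<in> C\<close>.\<close>
    define u where "u = (a \<bullet> q - b) / (a \<bullet> q - a \<bullet> p)"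
    define z where "z = (1 - u) *\<^sub>R q + u *\<^sub>R p"
    have "0 < u" "u < 1" using aq ap by (auto simp: u_def field_simps)
    then have z_seg: "z \<in> open_segment q p"
      using aq ap unfolding z_def in_segment by auto
    have "a \<bullet> z = a \<bullet> q - u * (a \<bullet> q - a \<bullet> p)"
      by (simp add: z_def inner_add_right algebra_simps)
    also have "\<dots> = b" using aq ap by (simp add: u_def)
    finally have "a \<bullet> z = b" .
    have "z \<in> Q"
      using convexD[OF \<open>convex Q\<close> \<open>q \<in> Q\<close>, of p "1 - u" u] \<open>p \<in> P\<close> assms(2) \<open>0 < u\<close> \<open>u < 1\<close>
      unfolding z_def by auto
    then have "z \<in> affine hull C"
      using \<open>a \<bullet> z = b\<close> assms(3) affine_hull_facet_eq_Int_hyperplane[OF CP C_eq P_le]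
      by (auto intro: hull_inc)
    then have "z \<in> C" using face_of_imp_eq_affine_Int[OF \<open>convex Q\<close> CQ] \<open>z \<in> Q\<close> by blast
    then have "p \<in> C" using face_ofD[OF CQ z_seg] \<open>q \<in> Q\<close> \<open>p \<in> P\<close> assms(2) by blast
    then show False using C_eq ap by simp
  qed
qed

lemma polyhedron_contains_locally:
  fixes P Q :: "'a::euclidean_space set"
  assumes "polyhedron P" "convex Q" "P \<subseteq> Q" "affine hull P = affine hull Q" "g \<in> P"
    and facets: "\<And>C. C facet_of P \<Longrightarrow> g \<in> C \<Longrightarrow> C face_of Q"
  obtains U where "open U" "g \<in> U" "Q \<inter> U \<subseteq> P"
proof -
  obtain Fam where "finite Fam" and P_eq: "P = affine hull P \<inter> \<Inter>Fam"
    and "\<And>h. h \<in> Fam \<Longrightarrow> \<exists>a b. a \<noteq> 0 \<and> h = {x. a \<bullet> x \<le> b}"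
    and min: "\<And>F'. F' \<subset> Fam \<Longrightarrow> P \<subset> affine hull P \<inter> \<Inter>F'"
    using assms(1) by (simp add: polyhedron_Int_affine_minimal) meson
  then obtain a b where ab: "\<And>h. h \<in> Fam \<Longrightarrow> a h \<noteq> 0 \<and> h = {x. a h \<bullet> x \<le> b h}"
    by metis
  \<comment> \<open>Near \<open>g\<close> only the inequalities tight at \<open>g\<close> matter, and these hold on all of \<open>Q\<close>.\<close>
  define U where "U = (\<Inter>h \<in> {h \<in> Fam. a h \<bullet> g \<noteq> b h}. {x. a h \<bullet> x < b h})"
  have "open U" unfolding U_def using \<open>finite Fam\<close> by (auto intro: open_halfspace_lt)
  have "a h \<bullet> g \<le> b h" if "h \<in> Fam" for h using assms(5) P_eq ab that by blast
  then have "g \<in> U" unfolding U_def by (force simp: order_less_le)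
  have Q_sub: "Q \<subseteq> h" if "h \<in> Fam" "a h \<bullet> g = b h" for h
  proof -
    let ?C = "P \<inter> {x. a h \<bullet> x = b h}"
    have "?C facet_of P"
      using facet_of_polyhedron_explicit[OF \<open>finite Fam\<close> P_eq ab min] that(1) by blast
    moreover have "?C face_of Q" using facets calculation that(2) assms(5) by simp
    moreover have "P \<subseteq> {x. a h \<bullet> x \<le> b h}" using P_eq ab that(1) by blast
    ultimately have "Q \<subseteq> {x. a h \<bullet> x \<le> b h}"
      using common_facet_halfspace[OF assms(2-4)] by blast
    then show ?thesis using ab that(1) by blast
  qed
  have "Q \<inter> U \<subseteq> P"
  proof
    fix x assume x: "x \<in> Q \<inter> U"
    have "x \<in> h" if "h \<in> Fam" for h
    proof (cases "a h \<bullet> g = b h")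
      case True
      then show ?thesis using Q_sub that x by blast
    next
      case False
      then have "a h \<bullet> x < b h" using x that unfolding U_def by blast
      then show ?thesis using ab that by fastforce
    qed
    moreover have "x \<in> affine hull P" using x assms(4) hull_subset[of Q affine] by blast
    ultimately show "x \<in> P" using P_eq by blast
  qed
  with \<open>open U\<close> \<open>g \<in> U\<close> show thesis by (rule that)
qed

lemma Int_facet_of_inner_polyhedron:
  fixes P Q F :: "'a::euclidean_space set"
  assumes "polyhedron P" "convex Q" "P \<subseteq> Q" and F: "F facet_of Q"
    and "F \<inter> P \<noteq> {}" "\<not> P \<subseteq> F"
    and facets: "\<And>C. C facet_of P \<Longrightarrow> F \<inter> P \<subseteq> C \<Longrightarrow> C facet_of Q"
  shows "(F \<inter> P) facet_of P"
proof -
  define G where "G = F \<inter> P"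
  have "convex P" using \<open>polyhedron P\<close> by (rule polyhedron_imp_convex)
  have "G face_of P"
    using face_of_slice[OF facet_of_imp_face_of[OF F] \<open>convex P\<close>] \<open>P \<subseteq> Q\<close>
    unfolding G_def by (simp add: Int_absorb1)
  have "G \<noteq> {}" "G \<noteq> P" using assms(5,6) unfolding G_def by auto
  then obtain C0 where "C0 facet_of P" "G \<subseteq> C0"
    using face_of_polyhedron_subset_facet[OF \<open>polyhedron P\<close> \<open>G face_of P\<close>] by blast
  then have "aff_dim P = aff_dim Q" using facets unfolding G_def facet_of_def by force
  then have aff: "affine hull P = affine hull Q" using aff_dim_eq_full_gen[OF \<open>P \<subseteq> Q\<close>] by simp
  obtain g where g: "g \<in> rel_interior G"
    using \<open>G \<noteq> {}\<close> face_of_imp_convex[OF \<open>G face_of P\<close>] rel_interior_eq_empty by blast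
  then have "g \<in> G" using rel_interior_subset by blast
  have "C face_of Q" if "C facet_of P" "g \<in> C" for C
  proof -
    have "G \<subseteq> C"
      using subset_of_face_of[OF facet_of_imp_face_of[OF that(1)]] face_of_imp_subset[OF \<open>G face_of P\<close>]
        g that(2) by blast
    then show ?thesis using facets that(1) facet_of_imp_face_of unfolding G_def by blast
  qed
  then obtain U where "open U" "g \<in> U" "Q \<inter> U \<subseteq> P"
    using polyhedron_contains_locally[OF \<open>polyhedron P\<close> \<open>convex Q\<close> \<open>P \<subseteq> Q\<close> aff] \<open>g \<in> G\<close>
    unfolding G_def by blast
  then have "F \<inter> U \<subseteq> G" using facet_of_imp_subset[OF F] unfolding G_def by blast
  have "F \<inter> U \<noteq> {}" using \<open>g \<in> U\<close> \<open>g \<in> G\<close> unfolding G_def by blast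
  then have "aff_dim (F \<inter> U) = aff_dim F"
    by (rule aff_dim_convex_Int_open[OF face_of_imp_convex[OF facet_of_imp_face_of[OF F]] \<open>open U\<close>])
  then have "aff_dim F \<le> aff_dim G" using aff_dim_subset[OF \<open>F \<inter> U \<subseteq> G\<close>] by simp
  then have "aff_dim P - 1 \<le> aff_dim G" using F \<open>aff_dim P = aff_dim Q\<close> unfolding facet_of_def by simp
  moreover have "aff_dim G < aff_dim P"
    using face_of_aff_dim_lt[OF \<open>convex P\<close> \<open>G face_of P\<close> \<open>G \<noteq> P\<close>] .
  ultimately show ?thesis using \<open>G face_of P\<close> \<open>G \<noteq> {}\<close> unfolding facet_of_def G_def by simp
qed

lemma polytope_Inter_facets_empty:
  fixes Q :: "'a::euclidean_space set"
  assumes "polytope Q" "F facet_of Q"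
  shows "\<Inter>{F'. F' facet_of Q} = {}"
proof (rule ccontr)
  assume "\<Inter>{F'. F' facet_of Q} \<noteq> {}"
  then obtain p where p: "\<And>F'. F' facet_of Q \<Longrightarrow> p \<in> F'" by blast
  then have "p \<in> Q" using assms(2) facet_of_imp_subset by blast
  have "F \<noteq> {}" "F \<noteq> Q" using assms(2) unfolding facet_of_def by auto
  then have "Q \<noteq> {p}" using facet_of_imp_subset[OF assms(2)] by blast
  obtain v where v: "v extreme_point_of Q" "v \<noteq> p"
  proof (rule ccontr)
    assume "\<not> thesis"
    with that have "{x. x extreme_point_of Q} \<subseteq> {p}" by blast
    then have "convex hull {x. x extreme_point_of Q} \<subseteq> {p}"
      by (metis convex_hull_singleton hull_mono)
    then show False
      using Krein_Milman_Minkowski[OF polytope_imp_compact polytope_imp_convex] assms(1)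
        \<open>p \<in> Q\<close> \<open>Q \<noteq> {p}\<close> by blast
  qed
  then have "{v} face_of Q" "{v} \<noteq> Q" using \<open>p \<in> Q\<close> face_of_singleton by auto
  then have "{v} = \<Inter>{F'. F' facet_of Q \<and> {v} \<subseteq> F'}"
    using face_of_polyhedron[OF polytope_imp_polyhedron[OF assms(1)]] by blast
  moreover have "p \<in> \<Inter>{F'. F' facet_of Q \<and> {v} \<subseteq> F'}" using p by blast
  ultimately show False using v(2) by (metis singletonD)
qed

lemma facet_of_inner_polytope:
  fixes P Q F :: "'a::euclidean_space set"
  assumes "polytope P" "polytope Q" "P \<subseteq> Q" "F facet_of Q"
    and witness: "\<And>F'. F' facet_of Q \<Longrightarrow> \<exists>S. S \<noteq> {} \<and> S \<subseteq> F' \<inter> P \<and>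
              (\<forall>C. C facet_of P \<and> S \<subseteq> C \<longrightarrow> C facet_of Q)"
  shows "F facet_of P"
proof -
  have facet_of_P: "F' facet_of P" if F': "F' facet_of Q" and "\<not> P \<subseteq> F'" for F'
  proof -
    obtain S where S: "S \<noteq> {}" "S \<subseteq> F' \<inter> P" "\<And>C. C facet_of P \<Longrightarrow> S \<subseteq> C \<Longrightarrow> C facet_of Q"
      using witness[OF F'] by blast
    have "(F' \<inter> P) facet_of P"
      using Int_facet_of_inner_polyhedron[OF polytope_imp_polyhedron polytope_imp_convex \<open>P \<subseteq> Q\<close> F']
        assms(1,2) S \<open>\<not> P \<subseteq> F'\<close> by blast
    moreover from this have "F' \<inter> P = F'"
      using facet_of_subset_eq[OF _ F'] S(2,3) by blast
    ultimately show ?thesis by simp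
  qed
  have "P \<noteq> {}" using witness[OF \<open>F facet_of Q\<close>] by blast
  show ?thesis
  proof (rule ccontr)
    assume "\<not> F facet_of P"
    then have "P \<subseteq> F" using facet_of_P[OF \<open>F facet_of Q\<close>] by blast
    have "P \<subseteq> F'" if F': "F' facet_of Q" for F'
    proof (rule ccontr)
      assume "\<not> P \<subseteq> F'"
      then have "F' \<subseteq> P" using facet_of_P[OF F'] facet_of_imp_subset by blast
      then have "F' = F" using facet_of_subset_eq[OF F' \<open>F facet_of Q\<close>] \<open>P \<subseteq> F\<close> by blast
      then show False using \<open>\<not> P \<subseteq> F'\<close> \<open>P \<subseteq> F\<close> by blast
    qed
    then show False using \<open>P \<noteq> {}\<close> polytope_Inter_facets_empty[OF assms(2,4)] by blast
  qed
qed

lemma column_matrix_matrix_mult: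
  fixes W :: "real^'r^'m" and H :: "real^'n^'r"
  shows "column j (W ** H) = (\<Sum>i\<in>UNIV. H $ i $ j *\<^sub>R column i W)"
  by (simp add: vec_eq_iff matrix_matrix_mult_def column_def sum_component mult.commute)

lemma finite_columns: "finite (columns (M :: real^'c^'m))"
  by (simp add: columns_image_basis)

lemma polytope_conv_cols: "polytope (conv_cols (M :: real^'c^'m))"
  unfolding conv_cols_def by (rule polytope_convex_hull[OF finite_columns])

lemma conv_cols_matrix_mult_subset:
  fixes W :: "real^'r^'m" and H :: "real^'n^'r"
  assumes "\<And>j. (\<forall>i. 0 \<le> H $ i $ j) \<and> (\<Sum>i\<in>UNIV. H $ i $ j) = 1"
  shows "conv_cols (W ** H) \<subseteq> conv_cols W"
  unfolding conv_cols_def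
proof (rule hull_minimal)
  show "columns (W ** H) \<subseteq> convex hull columns W"
  proof
    fix x assume "x \<in> columns (W ** H)"
    then obtain j where "x = column j (W ** H)" unfolding columns_def by blast
    also have "\<dots> = (\<Sum>i\<in>UNIV. H $ i $ j *\<^sub>R column i W)" by (rule column_matrix_matrix_mult)
    also have "\<dots> \<in> convex hull columns W"
    proof (rule convex_sum)
      show "column i W \<in> convex hull columns W" for i
        unfolding columns_def by (rule hull_inc) blast
    qed (use assms[of j] in auto)
    finally show "x \<in> convex hull columns W" .
  qed
qed (rule convex_convex_hull)

lemma FBC_facet_witness:
  assumes "FBC X W H s" "F facet_of conv_cols W"
  shows "\<exists>S. S \<noteq> {} \<and> S \<subseteq> F \<inter> conv_cols X \<and>
           (\<forall>C. C facet_of conv_cols X \<and> S \<subseteq> C \<longrightarrow> C facet_of conv_cols W)"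
proof -
  have "rank X \<le> s" using assms(1) unfolding FBC_def by blast
  have "\<exists>S. S \<subseteq> F \<inter> columns X \<and> s \<le> card S \<and> aff_dim (convex hull S) = int (rank X) - 2"
    using assms unfolding FBC_def by blast
  then obtain S where S: "S \<subseteq> F \<inter> columns X" "s \<le> card S" "aff_dim (convex hull S) = int (rank X) - 2"
    by blast
  \<comment> \<open>The dimension requirement in (c) matters only here: it excludes \<open>S = {}\<close>.\<close>
  have "S \<noteq> {}"
  proof
    assume "S = {}"
    then show False using S(2,3) \<open>rank X \<le> s\<close> by simp
  qed
  moreover have "S \<subseteq> F \<inter> conv_cols X"
    using S(1) hull_subset[of "columns X" convex] unfolding conv_cols_def by blast
  moreover have "C facet_of conv_cols W" if "C facet_of conv_cols X" "S \<subseteq> C" for C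
  proof (rule ccontr)
    assume "\<not> C facet_of conv_cols W"
    then have "card (C \<inter> columns X) < s" using assms(1) that(1) unfolding FBC_def by blast
    moreover have "card S \<le> card (C \<inter> columns X)"
      using S(1) that(2) by (intro card_mono) (auto simp: finite_columns)
    ultimately show False using S(2) by simp
  qed
  ultimately show ?thesis by blast
qed

theorem lemma1:
  fixes X :: "real^'n^'m" and W :: "real^'r^'m" and H :: "real^'n^'r" and s :: nat
  assumes "\<forall>i j. X $ i $ j \<ge> 0"
    and "\<forall>i j. H $ i $ j \<ge> 0"
    and "FBC X W H s"
  shows "\<forall>F. F facet_of conv_cols W \<longrightarrow> F facet_of conv_cols X"
proof (intro allI impI)
  fix F assume F: "F facet_of conv_cols W"
  have "X = W ** H" and "\<forall>j. (\<forall>i. 0 \<le> H $ i $ j) \<and> (\<Sum>i\<in>UNIV. H $ i $ j) = 1"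
    using assms(3) unfolding FBC_def by blast+
  then have "conv_cols X \<subseteq> conv_cols W" using conv_cols_matrix_mult_subset by blast
  then show "F facet_of conv_cols X"
    using facet_of_inner_polytope[OF polytope_conv_cols polytope_conv_cols _ F]
      FBC_facet_witness[OF assms(3)] by blast
qed

end
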